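(* Let $p \in [0,1]$. Consider the two-way eavesdropping on the semiquantum protocol described below. (i) SIFT bits: Alice sends a bit $a$ to Bob through a binary symmetric channel with crossover probability $p$; Bob measures in the $Z$ basis, obtaining $b$, and sends a fresh qubit encoding $b$ back to Alice through an independent binary symmetric channel with crossover probability $p$. (ii) CTRL bits: Alice sends $|a\rangle$; Eve applies a unitary $U$ with $U(|W\rangle|0\rangle) = \sqrt{1-p}\,|E_{00}\rangle|0\rangle + \sqrt{p}\,|E_{01}\rangle|1\rangle$, $U(|W\rangle|1\rangle) = \sqrt{p}\,|E_{10}\rangle|0\rangle + \sqrt{1-p}\,|E_{11}\rangle|1\rangle$; Bob reflects the qubit unchanged; Eve applies, with a fresh probe $|W'\rangle$, a unitary $U'$ of the same form with unit vectors $|E'_{ij}\rangle$; Alice measures in the $Z$ basis. Here all $|E_{ij}\rangle, |E'_{ij}\rangle$ are unit vectors in Eve's probe spaces and $\langle E_{00}|E_{01}\rangle = \langle E_{10}|E_{11}\rangle = 0$. Then the round-trip channels from Alice to Bob back to Alice in case (i) and in case (ii) are equivalent: both act as a binary symmetric channel with crossover probability $2p(1-p)$.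
   Context: In the semiquantum key distribution protocol, Bob either reflects a received qubit unchanged (CTRL bits) or measures it in the $Z$ basis $\{|0\rangle,|1\rangle\}$ and resends a fresh qubit in the measured state (SIFT bits). A binary symmetric channel with crossover probability $q$ flips the input bit with probability $q$ and leaves it unchanged with probability $1-q$, independently of the input value. *)

theory Defs
  imports Complex_Main
begin

text \<open>Computational basis of a qubit: False encodes |0>, True encodes |1>.\<close>
definition ket :: "bool \<Rightarrow> bool \<Rightarrow> complex" where
  "ket b x = (if x = b then 1 else 0)"

definition cinner :: "('i::finite \<Rightarrow> complex) \<Rightarrow> ('i \<Rightarrow> complex) \<Rightarrow> complex" where
  "cinner u v = (\<Sum>i\<in>UNIV. cnj (u i) * v i)"

definition unit_vec :: "('i::finite \<Rightarrow> complex) \<Rightarrow> bool" where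
  "unit_vec u \<longleftrightarrow> cinner u u = 1"

definition matvec :: "('i::finite \<Rightarrow> 'i \<Rightarrow> complex) \<Rightarrow> ('i \<Rightarrow> complex) \<Rightarrow> ('i \<Rightarrow> complex)" where
  "matvec M v = (\<lambda>i. \<Sum>j\<in>UNIV. M i j * v j)"

definition unitary_mat :: "('i::finite \<Rightarrow> 'i \<Rightarrow> complex) \<Rightarrow> bool" where
  "unitary_mat M \<longleftrightarrow> (\<forall>i j. (\<Sum>k\<in>UNIV. cnj (M k i) * M k j) = (if i = j then 1 else 0))"

definition bsc :: "real \<Rightarrow> bool \<Rightarrow> bool \<Rightarrow> real" where
  "bsc q x y = (if x = y then 1 - q else q)"

text \<open>SIFT round trip: Alice -> BSC(p) -> Bob measures b, resends b -> BSC(p) -> Alice.\<close>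
definition sift_prob :: "real \<Rightarrow> bool \<Rightarrow> bool \<Rightarrow> real" where
  "sift_prob p a c = (\<Sum>b\<in>UNIV. bsc p a b * bsc p b c)"

text \<open>Joint state of probe 1 ('e), probe 2 ('f) and the travelling qubit.\<close>
definition init_state :: "('e \<Rightarrow> complex) \<Rightarrow> ('f \<Rightarrow> complex) \<Rightarrow> bool \<Rightarrow> ('e \<times> 'f \<times> bool \<Rightarrow> complex)" where
  "init_state W W' a = (\<lambda>(e, f, x). W e * W' f * ket a x)"

definition apply1 :: "('e::finite \<times> bool \<Rightarrow> 'e \<times> bool \<Rightarrow> complex) \<Rightarrow> ('e \<times> 'f \<times> bool \<Rightarrow> complex) \<Rightarrow> ('e \<times> 'f \<times> bool \<Rightarrow> complex)" where
  "apply1 U \<psi> = (\<lambda>(e, f, x). \<Sum>(e', x')\<in>UNIV. U (e, x) (e', x') * \<psi> (e', f, x'))"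

definition apply2 :: "('f::finite \<times> bool \<Rightarrow> 'f \<times> bool \<Rightarrow> complex) \<Rightarrow> ('e \<times> 'f \<times> bool \<Rightarrow> complex) \<Rightarrow> ('e \<times> 'f \<times> bool \<Rightarrow> complex)" where
  "apply2 U' \<psi> = (\<lambda>(e, f, x). \<Sum>(f', x')\<in>UNIV. U' (f, x) (f', x') * \<psi> (e, f', x'))"

text \<open>Probability that Alice's Z-measurement of the qubit yields c (probes traced out).\<close>
definition z_meas_prob :: "('e::finite \<times> 'f::finite \<times> bool \<Rightarrow> complex) \<Rightarrow> bool \<Rightarrow> real" where
  "z_meas_prob \<psi> c = (\<Sum>(e, f)\<in>UNIV. (cmod (\<psi> (e, f, c)))\<^sup>2)"

text \<open>CTRL round trip: U, Bob reflects (identity), U' with fresh probe W', Alice measures in Z.\<close>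
definition ctrl_prob :: "('e::finite \<times> bool \<Rightarrow> 'e \<times> bool \<Rightarrow> complex) \<Rightarrow> ('f::finite \<times> bool \<Rightarrow> 'f \<times> bool \<Rightarrow> complex)
    \<Rightarrow> ('e \<Rightarrow> complex) \<Rightarrow> ('f \<Rightarrow> complex) \<Rightarrow> bool \<Rightarrow> bool \<Rightarrow> real" where
  "ctrl_prob U U' W W' a c = z_meas_prob (apply2 U' (apply1 U (init_state W W' a))) c"

definition eve_form :: "real \<Rightarrow> ('i::finite \<times> bool \<Rightarrow> 'i \<times> bool \<Rightarrow> complex) \<Rightarrow> ('i \<Rightarrow> complex)
    \<Rightarrow> ('i \<Rightarrow> complex) \<Rightarrow> ('i \<Rightarrow> complex) \<Rightarrow> ('i \<Rightarrow> complex) \<Rightarrow> ('i \<Rightarrow> complex) \<Rightarrow> bool" where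
  "eve_form p U W E00 E01 E10 E11 \<longleftrightarrow>
     matvec U (\<lambda>(i, x). W i * ket False x) =
       (\<lambda>(i, x). complex_of_real (sqrt (1 - p)) * E00 i * ket False x
               + complex_of_real (sqrt p) * E01 i * ket True x) \<and>
     matvec U (\<lambda>(i, x). W i * ket True x) =
       (\<lambda>(i, x). complex_of_real (sqrt p) * E10 i * ket False x
               + complex_of_real (sqrt (1 - p)) * E11 i * ket True x)"

end

theory Submission imports Defs begin

text \<open>After Eve's first unitary the qubit carries amplitude \<open>sqrt (bsc p a y)\<close> on \<open>|y\<rangle>\<close>,
  entangled with the probe state \<open>E\<^sub>a\<^sub>y\<close>; the second unitary maps \<open>|y\<rangle>\<close> to amplitude
  \<open>sqrt (bsc p y c)\<close> on \<open>|c\<rangle>\<close> with probe state \<open>E'\<^sub>y\<^sub>c\<close>. So the amplitude of Alice's outcome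
  \<open>c\<close> is a sum over the intermediate bit \<open>y\<close> of product vectors \<open>E\<^sub>a\<^sub>y \<otimes> E'\<^sub>y\<^sub>c\<close>. Since
  \<open>E\<^sub>a\<^sub>0 \<bottom> E\<^sub>a\<^sub>1\<close> the two terms do not interfere, and the outcome probability is
  \<open>\<Sum>y. bsc p a y * bsc p y c\<close>, i.e. exactly the SIFT round trip, which is \<open>bsc (2p(1-p))\<close>.\<close>

definition probe :: "('i \<Rightarrow> complex) \<Rightarrow> ('i \<Rightarrow> complex) \<Rightarrow> ('i \<Rightarrow> complex) \<Rightarrow> ('i \<Rightarrow> complex)
    \<Rightarrow> bool \<Rightarrow> bool \<Rightarrow> 'i \<Rightarrow> complex" where
  "probe E00 E01 E10 E11 a x = (if a then (if x then E11 else E10) else (if x then E01 else E00))"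

lemma cinner_commute: "cinner v u = cnj (cinner u v)"
  unfolding cinner_def by (simp add: mult.commute)

lemma sum_UNIV_prod: "(\<Sum>x\<in>(UNIV::('a::finite \<times> 'b::finite) set). F x) = (\<Sum>e\<in>UNIV. \<Sum>f\<in>UNIV. F (e, f))"
  by (simp add: sum.cartesian_product flip: UNIV_Times_UNIV)

lemma sum_cmod_square_orthogonal_products:
  fixes A0 A1 :: "'e::finite \<Rightarrow> complex" and B0 B1 :: "'f::finite \<Rightarrow> complex"
  assumes "unit_vec A0" "unit_vec A1" "unit_vec B0" "unit_vec B1" "cinner A0 A1 = 0"
  shows "(\<Sum>(e, f)\<in>UNIV. (cmod (of_real s0 * A0 e * B0 f + of_real s1 * A1 e * B1 f))\<^sup>2) = s0\<^sup>2 + s1\<^sup>2"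
proof -
  have "complex_of_real (\<Sum>(e, f)\<in>UNIV. (cmod (of_real s0 * A0 e * B0 f + of_real s1 * A1 e * B1 f))\<^sup>2)
     = (\<Sum>(e, f)\<in>UNIV. (of_real (s0\<^sup>2) * (cnj (A0 e) * A0 e)) * (cnj (B0 f) * B0 f)
        + (of_real (s0 * s1) * (cnj (A0 e) * A1 e)) * (cnj (B0 f) * B1 f)
        + (of_real (s0 * s1) * (cnj (A1 e) * A0 e)) * (cnj (B1 f) * B0 f)
        + (of_real (s1\<^sup>2) * (cnj (A1 e) * A1 e)) * (cnj (B1 f) * B1 f))"
    unfolding of_real_sum
    by (rule sum.cong[OF refl], clarify, unfold complex_norm_square) (simp add: algebra_simps power2_eq_square)
  also have "\<dots> = of_real (s0\<^sup>2) * cinner A0 A0 * cinner B0 B0 + of_real (s0 * s1) * cinner A0 A1 * cinner B0 B1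
     + of_real (s0 * s1) * cinner A1 A0 * cinner B1 B0 + of_real (s1\<^sup>2) * cinner A1 A1 * cinner B1 B1"
    unfolding cinner_def sum_UNIV_prod by (simp add: sum_product sum_distrib_left sum.distrib mult_ac)
  also have "\<dots> = complex_of_real (s0\<^sup>2 + s1\<^sup>2)"
    using assms cinner_commute[of A1 A0] unfolding unit_vec_def by simp
  finally show ?thesis
    using of_real_eq_iff by blast
qed

lemma sift_prob_eq_bsc: "sift_prob p a c = bsc (2 * p * (1 - p)) a c"
  unfolding sift_prob_def bsc_def
  by (cases a; cases c) (simp_all add: UNIV_bool algebra_simps)

lemma eve_form_matvec:
  assumes "eve_form p U W E00 E01 E10 E11"
  shows "matvec U (\<lambda>(i, y). W i * ket a y) (e, x)
           = of_real (sqrt (bsc p a x)) * probe E00 E01 E10 E11 a x e"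
proof -
  from assms have "matvec U (\<lambda>(i, y). W i * ket a y) (e, x) =
     (if a then of_real (sqrt p) * E10 e * ket False x + of_real (sqrt (1 - p)) * E11 e * ket True x
      else of_real (sqrt (1 - p)) * E00 e * ket False x + of_real (sqrt p) * E01 e * ket True x)"
    unfolding eve_form_def by (cases a) (auto simp: fun_eq_iff)
  then show ?thesis
    by (cases a; cases x) (simp_all add: ket_def bsc_def probe_def)
qed

lemma apply1_init_state:
  "apply1 U (init_state W W' a) = (\<lambda>(e, f, x). matvec U (\<lambda>(i, y). W i * ket a y) (e, x) * W' f)"
  unfolding apply1_def init_state_def matvec_def
  by (auto simp: fun_eq_iff sum_distrib_right sum_distrib_left split_def mult_ac intro!: sum.cong)

lemma apply2_product_state:
  "apply2 U' (\<lambda>(e, f, x). \<phi> (e, x) * W' f)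
     = (\<lambda>(e, f, x). \<Sum>y\<in>UNIV. \<phi> (e, y) * matvec U' (\<lambda>(j, z). W' j * ket y z) (f, x))"
proof (rule ext, clarify)
  fix e f x
  have "(\<Sum>y\<in>UNIV. \<phi> (e, y) * (\<Sum>q\<in>UNIV. U' (f, x) q * (W' (fst q) * ket y (snd q))))
      = (\<Sum>q\<in>UNIV. \<Sum>y\<in>UNIV. \<phi> (e, y) * (U' (f, x) q * (W' (fst q) * ket y (snd q))))"
    unfolding sum_distrib_left by (rule sum.swap)
  also have "\<dots> = (\<Sum>q\<in>UNIV. U' (f, x) q * (\<phi> (e, snd q) * W' (fst q)))"
    by (rule sum.cong) (auto simp: UNIV_bool ket_def)
  finally show "apply2 U' (\<lambda>(e, f, x). \<phi> (e, x) * W' f) (e, f, x)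
      = (\<Sum>y\<in>UNIV. \<phi> (e, y) * matvec U' (\<lambda>(j, z). W' j * ket y z) (f, x))"
    unfolding apply2_def matvec_def by (simp add: split_def)
qed

lemma ctrl_amplitude:
  assumes "eve_form p U W E00 E01 E10 E11" and "eve_form p U' W' E'00 E'01 E'10 E'11"
  shows "apply2 U' (apply1 U (init_state W W' a)) (e, f, c)
     = (\<Sum>y\<in>UNIV. of_real (sqrt (bsc p a y) * sqrt (bsc p y c))
                   * probe E00 E01 E10 E11 a y e * probe E'00 E'01 E'10 E'11 y c f)"
  unfolding apply1_init_state apply2_product_state
  by (simp add: eve_form_matvec[OF assms(1)] eve_form_matvec[OF assms(2)] mult_ac)

lemma ctrl_prob_eq_sift_prob:
  fixes U :: "'e::finite \<times> bool \<Rightarrow> 'e \<times> bool \<Rightarrow> complex"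
    and U' :: "'f::finite \<times> bool \<Rightarrow> 'f \<times> bool \<Rightarrow> complex"
  assumes "0 \<le> p" "p \<le> 1"
    and "unit_vec E00" "unit_vec E01" "unit_vec E10" "unit_vec E11"
    and "unit_vec E'00" "unit_vec E'01" "unit_vec E'10" "unit_vec E'11"
    and "cinner E00 E01 = 0" "cinner E10 E11 = 0"
    and "eve_form p U W E00 E01 E10 E11" "eve_form p U' W' E'00 E'01 E'10 E'11"
  shows "ctrl_prob U U' W W' a c = sift_prob p a c"
proof -
  let ?E = "probe E00 E01 E10 E11" and ?E' = "probe E'00 E'01 E'10 E'11"
  define s where "s y = sqrt (bsc p a y) * sqrt (bsc p y c)" for y
  have "ctrl_prob U U' W W' a c = (\<Sum>(e, f)\<in>UNIV.
      (cmod (of_real (s False) * ?E a False e * ?E' False c f + of_real (s True) * ?E a True e * ?E' True c f))\<^sup>2)"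
    unfolding ctrl_prob_def z_meas_prob_def ctrl_amplitude[OF assms(13,14)]
    by (simp add: UNIV_bool s_def)
  also have "\<dots> = (s False)\<^sup>2 + (s True)\<^sup>2"
    by (rule sum_cmod_square_orthogonal_products) (use assms(3-12) in \<open>auto simp: probe_def\<close>)
  also have "\<dots> = sift_prob p a c"
    using assms(1,2) by (simp add: s_def sift_prob_def UNIV_bool power_mult_distrib bsc_def)
  finally show ?thesis .
qed

theorem theorem1:
  fixes p :: real
    and U :: "'e::finite \<times> bool \<Rightarrow> 'e \<times> bool \<Rightarrow> complex"
    and U' :: "'f::finite \<times> bool \<Rightarrow> 'f \<times> bool \<Rightarrow> complex"
    and W E00 E01 E10 E11 :: "'e \<Rightarrow> complex"
    and W' E'00 E'01 E'10 E'11 :: "'f \<Rightarrow> complex"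
  assumes "0 \<le> p" and "p \<le> 1"
    and "unitary_mat U" and "unitary_mat U'"
    and "unit_vec W" and "unit_vec W'"
    and "unit_vec E00" and "unit_vec E01" and "unit_vec E10" and "unit_vec E11"
    and "unit_vec E'00" and "unit_vec E'01" and "unit_vec E'10" and "unit_vec E'11"
    and "cinner E00 E01 = 0" and "cinner E10 E11 = 0"
    and "cinner E'00 E'01 = 0" and "cinner E'10 E'11 = 0"
    and "eve_form p U W E00 E01 E10 E11"
    and "eve_form p U' W' E'00 E'01 E'10 E'11"
  shows "\<forall>a c. sift_prob p a c = bsc (2 * p * (1 - p)) a c
              \<and> ctrl_prob U U' W W' a c = bsc (2 * p * (1 - p)) a c"
  using ctrl_prob_eq_sift_prob[OF assms(1,2,7-16,19,20)] sift_prob_eq_bsc by simp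

end
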